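(* Let $y\in\tilde W$ and $s\in\tilde{\mathbb S}$ with $\ell(sy\delta(s))=\ell(y)$. If $y\mathbf a$ is a $(J,w,\delta)$-alcove (for some $J\subset\mathbb S$ with $\delta(J)=J$ and $w\in W$), then $sy\delta(s)\mathbf a$ is a $(J,\bar sw,\delta)$-alcove, where $\bar s$ is the image of $s$ in $W$.
   Context: Let $\tilde W=X_*(T)_\Gamma\rtimes W$ be the Iwahori–Weyl group of a quasi-split connected semisimple group $G$ over a local field $F$ (finite extension of $\mathbb Q_p$ or $\mathbb F_q((\epsilon))$) split over a tamely ramified extension, relative to a maximal $L$-split torus $S$ defined over $F$ with centralizer $T$, where $L$ is the completion of the maximal unramified extension of $F$ and $\Gamma=\mathrm{Gal}(\bar L/L)$. $\delta$ is the automorphism of $\tilde W$ (and of $W$) induced by the Frobenius of $L/F$. $V=X_*(T)_\Gamma\otimes\mathbb R$; $\Sigma$ is the reduced root system with affine roots $v\mapsto\langle a,v\rangle+k$ ($a\in\Sigma,k\in\mathbb Z$), $H_{a,k}=\{v:\langle a,v\rangle=k\}$, $W=W(\Sigma)$. $\mathbf a$ is a fixed $\sigma$-stable base alcove lying in the anti-dominant chamber; $\ell$ is the length function on $\tilde W$ (number of affine root hyperplanes separating $x\mathbf a$ from $\mathbf a$); $\tilde{\mathbb S}$ the simple affine reflections; $\mathbb S$ the simple roots/simple reflections of $W$ determined by the chamber; $\Sigma^+$ positive roots; for $J\subset\mathbb S$, $\Sigma_J$ roots spanned by $J$, $\Sigma_J^+=\Sigma_J\cap\Sigma^+$, $W_J$,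 $\tilde W_J=X_*(T)_\Gamma\rtimes W_J$. For an alcove $\mathbf b$ and $a\in\Sigma$, $k(a,\mathbf b)$ is the integer $k$ with $\mathbf b$ between $H_{a,k}$ and $H_{a,k-1}$. $x\mathbf a$ is a $(J,w,\delta)$-alcove if (1) $w^{-1}x\delta(w)\in\tilde W_J$ and (2) $k(a,x\mathbf a)\ge k(a,\mathbf a)$ for all $a\in w(\Sigma^+\setminus\Sigma_J^+)$ (this is equivalent to the group-theoretic condition $\mathbf U_a(L)\cap xIx^{-1}\subseteq\mathbf U_a(L)\cap I$ for root subgroups, with $I$ the Iwahori of $\mathbf a$). *)

theory Defs
  imports "HOL-Analysis.Analysis"
begin

text \<open>Combinatorial model of the Iwahori-Weyl group acting on the apartment
  V (a Euclidean space 'v).  Roots are identified with vectors of V via a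
  W- and sigma-invariant inner product, so the pairing is the inner product.\<close>

definition root_refl :: "'v::euclidean_space \<Rightarrow> 'v \<Rightarrow> 'v" where
  "root_refl a v = v - (2 * (a \<bullet> v) / (a \<bullet> a)) *\<^sub>R a"

definition coroot :: "'v::euclidean_space \<Rightarrow> 'v" where
  "coroot a = (2 / (a \<bullet> a)) *\<^sub>R a"

definition aff_refl :: "'v::euclidean_space \<Rightarrow> int \<Rightarrow> 'v \<Rightarrow> 'v" where
  "aff_refl a k v = v - (a \<bullet> v - real_of_int k) *\<^sub>R coroot a"

inductive_set refl_group :: "'v::euclidean_space set \<Rightarrow> ('v \<Rightarrow> 'v) set" for A where
  id_in: "id \<in> refl_group A"
| step: "a \<in> A \<Longrightarrow> u \<in> refl_group A \<Longrightarrow> root_refl a \<circ> u \<in> refl_group A"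

definition reduced_root_system :: "'v::euclidean_space set \<Rightarrow> bool" where
  "reduced_root_system R \<longleftrightarrow> finite R \<and> 0 \<notin> R \<and> span R = UNIV
     \<and> (\<forall>a\<in>R. \<forall>b\<in>R. root_refl a b \<in> R)
     \<and> (\<forall>a\<in>R. \<forall>b\<in>R. 2 * (a \<bullet> b) / (a \<bullet> a) \<in> \<int>)
     \<and> (\<forall>a\<in>R. \<forall>c::real. c *\<^sub>R a \<in> R \<longrightarrow> c = 1 \<or> c = -1)"

definition positive_system :: "'v::euclidean_space set \<Rightarrow> 'v set \<Rightarrow> bool" where
  "positive_system R P \<longleftrightarrow> (\<exists>g. (\<forall>a\<in>R. a \<bullet> g \<noteq> 0) \<and> P = {a\<in>R. a \<bullet> g > 0})"

definition simple_roots :: "'v::euclidean_space set \<Rightarrow> 'v set" where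
  "simple_roots P = {a\<in>P. \<not> (\<exists>b\<in>P. \<exists>c\<in>P. a = b + c)}"

definition coroot_lattice :: "'v::euclidean_space set \<Rightarrow> 'v set" where
  "coroot_lattice R = {v. \<exists>c::'v \<Rightarrow> int. v = (\<Sum>a\<in>R. of_int (c a) *\<^sub>R coroot a)}"

text \<open>Image of X_*(T)_Gamma in V: a subgroup between the coroot lattice and
  the coweight lattice.\<close>
definition admissible_lattice :: "'v::euclidean_space set \<Rightarrow> 'v set \<Rightarrow> bool" where
  "admissible_lattice R L \<longleftrightarrow> 0 \<in> L \<and> (\<forall>x\<in>L. \<forall>y\<in>L. x + y \<in> L \<and> - x \<in> L)
     \<and> coroot_lattice R \<subseteq> L \<and> (\<forall>t\<in>L. \<forall>a\<in>R. a \<bullet> t \<in> \<int>)"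

text \<open>Base alcove: the alcove in the anti-dominant chamber whose closure contains 0.\<close>
definition base_alcove :: "'v::euclidean_space set \<Rightarrow> 'v set" where
  "base_alcove P = {v. \<forall>a\<in>P. -1 < a \<bullet> v \<and> a \<bullet> v < 0}"

definition iw_sub :: "'v::euclidean_space set \<Rightarrow> ('v \<Rightarrow> 'v) set \<Rightarrow> ('v \<Rightarrow> 'v) set" where
  "iw_sub L W0 = {(\<lambda>v. t + u v) | t u. t \<in> L \<and> u \<in> W0}"

abbreviation iw_group :: "'v::euclidean_space set \<Rightarrow> 'v set \<Rightarrow> ('v \<Rightarrow> 'v) set" where
  "iw_group R L \<equiv> iw_sub L (refl_group R)"

definition frob :: "('v \<Rightarrow> 'v) \<Rightarrow> ('v \<Rightarrow> 'v) \<Rightarrow> ('v \<Rightarrow> 'v)" where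
  "frob \<sigma> x = \<sigma> \<circ> x \<circ> inv \<sigma>"

definition linpart :: "('v::real_vector \<Rightarrow> 'v) \<Rightarrow> 'v \<Rightarrow> 'v" where
  "linpart x = (\<lambda>v. x v - x 0)"

definition hyp_separates :: "'v::euclidean_space \<Rightarrow> int \<Rightarrow> 'v set \<Rightarrow> 'v set \<Rightarrow> bool" where
  "hyp_separates a k A B \<longleftrightarrow>
     ((\<forall>p\<in>A. a \<bullet> p < real_of_int k) \<and> (\<forall>q\<in>B. a \<bullet> q > real_of_int k))
   \<or> ((\<forall>p\<in>A. a \<bullet> p > real_of_int k) \<and> (\<forall>q\<in>B. a \<bullet> q < real_of_int k))"

text \<open>Length: number of affine root hyperplanes separating x a from a
  (each hyperplane H_{a,k} = H_{-a,-k} counted once, via positive a).\<close>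
definition iw_length :: "'v::euclidean_space set \<Rightarrow> ('v \<Rightarrow> 'v) \<Rightarrow> nat" where
  "iw_length P x = card {(a, k). a \<in> P \<and> hyp_separates a k (base_alcove P) (x ` base_alcove P)}"

definition alcove_k :: "'v::euclidean_space \<Rightarrow> 'v set \<Rightarrow> int" where
  "alcove_k a B = (THE k::int. \<forall>v\<in>B. real_of_int k - 1 < a \<bullet> v \<and> a \<bullet> v < real_of_int k)"

definition is_wall :: "'v::euclidean_space set \<Rightarrow> 'v set \<Rightarrow> 'v \<Rightarrow> int \<Rightarrow> bool" where
  "is_wall R A a k \<longleftrightarrow> (\<exists>p\<in>closure A. a \<bullet> p = real_of_int k \<and>
     (\<forall>b\<in>R. \<forall>m::int. b \<bullet> p = real_of_int m \<longrightarrow> (b = a \<and> m = k) \<or> (b = - a \<and> m = - k)))"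

definition simple_aff_refls :: "'v::euclidean_space set \<Rightarrow> 'v set \<Rightarrow> ('v \<Rightarrow> 'v) set" where
  "simple_aff_refls R P = {aff_refl a k | a k. a \<in> R \<and> is_wall R (base_alcove P) a k}"

definition roots_J :: "'v::euclidean_space set \<Rightarrow> 'v set \<Rightarrow> 'v set" where
  "roots_J R J = {b\<in>R. b \<in> span J}"

definition JWD_alcove :: "'v::euclidean_space set \<Rightarrow> 'v set \<Rightarrow> 'v set \<Rightarrow> ('v \<Rightarrow> 'v)
    \<Rightarrow> 'v set \<Rightarrow> ('v \<Rightarrow> 'v) \<Rightarrow> ('v \<Rightarrow> 'v) \<Rightarrow> bool" where
  "JWD_alcove R P L \<sigma> J w x \<longleftrightarrow>
     inv w \<circ> x \<circ> frob \<sigma> w \<in> iw_sub L (refl_group J)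
   \<and> (\<forall>a \<in> w ` (P - (roots_J R J \<inter> P)). alcove_k a (x ` base_alcove P) \<ge> alcove_k a (base_alcove P))"

definition iw_datum :: "'v::euclidean_space set \<Rightarrow> 'v set \<Rightarrow> 'v set \<Rightarrow> ('v \<Rightarrow> 'v) \<Rightarrow> bool" where
  "iw_datum R P L \<sigma> \<longleftrightarrow> reduced_root_system R \<and> positive_system R P \<and> admissible_lattice R L
     \<and> linear \<sigma> \<and> (\<forall>v. norm (\<sigma> v) = norm v) \<and> \<sigma> ` R = R \<and> \<sigma> ` L = L
     \<and> \<sigma> ` base_alcove P = base_alcove P"

end

theory Submission
  imports Defs
begin

text \<open>Every element x = t + u of the Iwahori-Weyl group pulls each affine root back to an affine
  root, so the level k(\<alpha>, x\<aa>) is an explicit integer and \<open>\<ell>(x)\<close> is the sum over positive \<alpha> of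
  |k(\<alpha>, x\<aa>) - k(\<alpha>, \<aa>)|. Passing from y to s y \<delta>(s) changes these relative levels (after
  reindexing by the linear part of s) only at the four roots \<open>\<plusminus>\<beta>\<close>, \<open>\<plusminus>\<gamma>\<close>, where \<open>H\<^sub>\<beta>\<close> is the wall
  of s and \<gamma> is the image of \<beta> under the linear part of y\<sigma>; there they move by \<open>\<plusminus>1\<close>.
  If a relative level on w(\<open>\<Sigma>\<^sup>+ - \<Sigma>\<^sub>J\<^sup>+\<close>), a set stable under that linear part, turned
  negative, both \<beta> and \<gamma> would gain a separating hyperplane and the length would grow by 2.
  The parabolic part of the condition is a direct computation: conjugating s y \<delta>(s) by the
  linear part of s w has the same linear part in \<open>W\<^sub>J\<close> as the conjugate of y by w.\<close>

lemma root_refl_self: "a \<noteq> 0 \<Longrightarrow> root_refl a a = - a"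
  unfolding root_refl_def by (simp add: scaleR_2)

lemma root_refl_root_refl: "a \<noteq> 0 \<Longrightarrow> root_refl a (root_refl a v) = v"
  unfolding root_refl_def by (simp add: inner_diff_right algebra_simps field_simps)

lemma linear_root_refl: "linear (root_refl a)"
  unfolding root_refl_def
  by (intro linearI) (simp_all add: inner_add_right add_divide_distrib scaleR_add_left algebra_simps)

lemma inner_root_refl: "a \<noteq> 0 \<Longrightarrow> root_refl a x \<bullet> root_refl a y = x \<bullet> y"
  unfolding root_refl_def
  by (simp add: inner_diff_left inner_diff_right inner_commute field_simps power2_eq_square)

lemma orthogonal_transformation_root_refl: "a \<noteq> 0 \<Longrightarrow> orthogonal_transformation (root_refl a)"
  unfolding orthogonal_transformation_def using linear_root_refl inner_root_refl by blast

lemma root_refl_eq_coroot: "root_refl a v = v - (a \<bullet> v) *\<^sub>R coroot a"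
  unfolding root_refl_def coroot_def by (simp add: scaleR_scaleR)

lemma aff_refl_eq: "aff_refl a k v = root_refl a v + of_int k *\<^sub>R coroot a"
  unfolding aff_refl_def root_refl_eq_coroot by (simp add: algebra_simps)

lemma linpart_aff_refl: "linpart (aff_refl a k) = root_refl a"
  unfolding linpart_def aff_refl_eq by (rule ext) (simp add: root_refl_eq_coroot)

lemma root_refl_coroot: "a \<noteq> 0 \<Longrightarrow> root_refl a (coroot a) = - coroot a"
proof -
  assume "a \<noteq> 0"
  then have "a \<bullet> coroot a = 2" unfolding coroot_def by simp
  then show ?thesis unfolding root_refl_eq_coroot by (simp add: scaleR_2)
qed

lemma aff_refl_aff_refl: "a \<noteq> 0 \<Longrightarrow> aff_refl a k (aff_refl a k v) = v"
  by (simp add: aff_refl_eq linear_add[OF linear_root_refl] linear_scale[OF linear_root_refl]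
      root_refl_root_refl root_refl_coroot)

lemma image_eq_of_involution: "(\<And>x. f (f x) = x) \<Longrightarrow> f ` S \<subseteq> S \<Longrightarrow> f ` S = S"
  by (metis image_eqI subsetI subset_antisym image_subset_iff)

lemma strict_Cauchy_Schwarz:
  fixes a b :: "'a::real_inner"
  assumes "a \<noteq> 0" "\<forall>k. b \<noteq> k *\<^sub>R a"
  shows "(a \<bullet> b) * (a \<bullet> b) < (a \<bullet> a) * (b \<bullet> b)"
proof -
  have "b \<noteq> 0" using assms(2)[rule_format, of 0] by simp
  then have "\<not> collinear {0, a, b}" using assms by (simp add: collinear_lemma)
  then have "\<bar>a \<bullet> b\<bar> < norm a * norm b"
    using Cauchy_Schwarz_ineq2[of a b] norm_cauchy_schwarz_equal[of a b] by linarith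
  then have "\<bar>a \<bullet> b\<bar> * \<bar>a \<bullet> b\<bar> < (norm a * norm b) * (norm a * norm b)"
    by (intro mult_strict_mono) auto
  then show ?thesis by (simp add: power2_norm_eq_inner[symmetric] power2_eq_square algebra_simps)
qed

section \<open>Pullbacks of roots and levels of alcoves\<close>

definition root_pullback :: "('v::euclidean_space \<Rightarrow> 'v) \<Rightarrow> 'v \<Rightarrow> 'v \<Rightarrow> int \<Rightarrow> bool" where
  "root_pullback f \<alpha> \<beta> c \<longleftrightarrow> (\<forall>v. \<alpha> \<bullet> f v = \<beta> \<bullet> v + of_int c)"

lemma root_pullback_id: "root_pullback id \<alpha> \<alpha> 0"
  unfolding root_pullback_def by simp

lemma root_pullback_comp:
  "root_pullback f \<alpha> \<beta> c \<Longrightarrow> root_pullback h \<beta> \<gamma> d \<Longrightarrow> root_pullback (f \<circ> h) \<alpha> \<gamma> (c + d)"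
  unfolding root_pullback_def by simp

lemma root_pullback_uminus: "root_pullback f \<alpha> \<beta> c \<Longrightarrow> root_pullback f (- \<alpha>) (- \<beta>) (- c)"
  unfolding root_pullback_def by simp

lemma alcove_k_eqI:
  assumes "v \<in> B" and "\<And>v. v \<in> B \<Longrightarrow> of_int k - 1 < \<alpha> \<bullet> v \<and> \<alpha> \<bullet> v < of_int k"
  shows "alcove_k \<alpha> B = k"
  unfolding alcove_k_def
proof (rule the_equality)
  fix k' assume "\<forall>v\<in>B. of_int k' - 1 < \<alpha> \<bullet> v \<and> \<alpha> \<bullet> v < of_int k'"
  then have "of_int k' - 1 < \<alpha> \<bullet> v" "\<alpha> \<bullet> v < of_int k'" using assms(1) by auto
  moreover have "of_int k - 1 < \<alpha> \<bullet> v" "\<alpha> \<bullet> v < of_int k" using assms by auto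
  ultimately have "k' < k + 1" "k < k' + 1" by linarith+
  then show "k' = k" by linarith
qed (use assms in blast)

locale iwahori_datum =
  fixes R P L :: "'v::euclidean_space set" and \<sigma> :: "'v \<Rightarrow> 'v"
  assumes datum: "iw_datum R P L \<sigma>"
begin

abbreviation "A0 \<equiv> base_alcove P"

lemma reduced_root_system: "reduced_root_system R"
  using datum by (simp add: iw_datum_def)

lemma finite_roots: "finite R"
  using reduced_root_system by (simp add: reduced_root_system_def)

lemma root_nonzero: "a \<in> R \<Longrightarrow> a \<noteq> 0"
  using reduced_root_system by (auto simp: reduced_root_system_def)

lemma root_refl_root: "a \<in> R \<Longrightarrow> b \<in> R \<Longrightarrow> root_refl a b \<in> R"
  using reduced_root_system by (simp add: reduced_root_system_def)

lemma cartan_integer: "a \<in> R \<Longrightarrow> b \<in> R \<Longrightarrow> \<exists>n::int. 2 * (a \<bullet> b) / (a \<bullet> a) = of_int n"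
  using reduced_root_system unfolding reduced_root_system_def by (metis Ints_cases)

lemma root_multiple: "a \<in> R \<Longrightarrow> c *\<^sub>R a \<in> R \<Longrightarrow> c = 1 \<or> c = -1"
  using reduced_root_system by (simp add: reduced_root_system_def)

lemma uminus_root: "a \<in> R \<Longrightarrow> - a \<in> R"
  using root_refl_root[of a a] root_refl_self root_nonzero by metis

lemma root_ne_uminus: "x \<in> R \<Longrightarrow> x \<noteq> - x"
proof
  assume "x \<in> R" "x = - x"
  then have "(2::real) *\<^sub>R x = 0" by (metis scaleR_2 add.inverse_inverse neg_eq_iff_add_eq_0)
  then show False using root_nonzero[OF \<open>x \<in> R\<close>] by simp
qed

lemma inner_root_self_pos: "a \<in> R \<Longrightarrow> a \<bullet> a > 0"
  using root_nonzero by simp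

lemma chamber_vector: "\<exists>g. (\<forall>a\<in>R. a \<bullet> g \<noteq> 0) \<and> P = {a\<in>R. a \<bullet> g > 0}"
  using datum by (simp add: iw_datum_def positive_system_def)

lemma positive_roots: "P \<subseteq> R"
  using chamber_vector by auto

lemma finite_positive: "finite P"
  using positive_roots finite_roots finite_subset by blast

lemma uminus_positive: "a \<in> R \<Longrightarrow> a \<notin> P \<Longrightarrow> - a \<in> P"
  using chamber_vector uminus_root by (smt (verit, ccfv_SIG) inner_minus_left mem_Collect_eq)

lemma uminus_not_positive: "a \<in> P \<Longrightarrow> - a \<notin> P"
  using chamber_vector by (smt (verit, ccfv_SIG) inner_minus_left mem_Collect_eq)

lemma base_alcove_nonempty: "\<exists>v. v \<in> A0"
proof -
  obtain g where g: "P = {a\<in>R. a \<bullet> g > 0}" using chamber_vector by blast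
  define S where "S = (\<Sum>a\<in>P. a \<bullet> g)"
  have pos: "a \<in> P \<Longrightarrow> a \<bullet> g > 0" for a using g by auto
  have le: "a \<in> P \<Longrightarrow> a \<bullet> g \<le> S" for a
    unfolding S_def using finite_positive pos by (intro member_le_sum) (auto intro: less_imp_le)
  have "(- 1 / (S + 1)) *\<^sub>R g \<in> A0"
    unfolding base_alcove_def
  proof (intro CollectI ballI conjI)
    fix a assume a: "a \<in> P"
    have "0 < a \<bullet> g" "a \<bullet> g < S + 1" using pos[OF a] le[OF a] by linarith+
    then show "a \<bullet> (- 1 / (S + 1)) *\<^sub>R g < 0" "-1 < a \<bullet> (- 1 / (S + 1)) *\<^sub>R g"
      by (simp_all add: divide_less_eq)
  qed
  then show ?thesis by blast
qed

lemma base_alcove_bounds: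
  assumes "v \<in> A0" "a \<in> R"
  shows "of_int (if a \<in> P then 0 else 1) - 1 < a \<bullet> v \<and> a \<bullet> v < of_int (if a \<in> P then 0 else 1)"
proof (cases "a \<in> P")
  case False
  then have "-1 < - a \<bullet> v \<and> - a \<bullet> v < 0"
    using assms uminus_positive[OF assms(2)] by (auto simp: base_alcove_def)
  then show ?thesis using False by simp
qed (use assms in \<open>auto simp: base_alcove_def\<close>)

lemma alcove_k_pullback_base:
  assumes "root_pullback f \<alpha> \<beta> c" "\<beta> \<in> R"
  shows "alcove_k \<alpha> (f ` A0) = c + (if \<beta> \<in> P then 0 else 1)"
proof -
  obtain q where "q \<in> A0" using base_alcove_nonempty by blast
  then show ?thesis
    using assms base_alcove_bounds[OF _ assms(2)]
    by (intro alcove_k_eqI[of "f q"]) (auto simp: root_pullback_def)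
qed

lemma alcove_k_base: "\<alpha> \<in> R \<Longrightarrow> alcove_k \<alpha> A0 = (if \<alpha> \<in> P then 0 else 1)"
  using alcove_k_pullback_base[OF root_pullback_id] by simp

lemma alcove_k_pullback:
  "root_pullback f \<alpha> \<beta> c \<Longrightarrow> \<beta> \<in> R \<Longrightarrow> alcove_k \<alpha> (f ` A0) = c + alcove_k \<beta> A0"
  using alcove_k_pullback_base alcove_k_base by simp

lemma alcove_k_comp:
  assumes "root_pullback f \<alpha> \<beta> c" "root_pullback h \<beta> \<gamma> d" "\<gamma> \<in> R"
  shows "alcove_k \<alpha> ((f \<circ> h) ` A0) = c + alcove_k \<beta> (h ` A0)"
  using alcove_k_pullback[OF root_pullback_comp[OF assms(1,2)] assms(3)]
    alcove_k_pullback[OF assms(2,3)] by simp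

lemma alcove_k_uminus:
  assumes "root_pullback f \<alpha> \<beta> c" "\<beta> \<in> R"
  shows "alcove_k (- \<alpha>) (f ` A0) = 1 - alcove_k \<alpha> (f ` A0)"
  using alcove_k_pullback_base[OF assms] uminus_positive[OF assms(2)] uminus_not_positive
    alcove_k_pullback_base[OF root_pullback_uminus[OF assms(1)] uminus_root[OF assms(2)]]
  by auto

lemma alcove_k_bounds:
  assumes "root_pullback f \<alpha> \<beta> c" "\<beta> \<in> R" "q \<in> A0"
  shows "of_int (alcove_k \<alpha> (f ` A0)) - 1 < \<alpha> \<bullet> f q \<and> \<alpha> \<bullet> f q < of_int (alcove_k \<alpha> (f ` A0))"
  using alcove_k_pullback_base[OF assms(1,2)] base_alcove_bounds[OF assms(3,2)] assms(1)
  by (auto simp: root_pullback_def)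

lemma hyp_separates_base_iff:
  assumes "root_pullback f \<alpha> \<beta> c" "\<beta> \<in> R" "\<alpha> \<in> P" and K: "alcove_k \<alpha> (f ` A0) = K"
  shows "hyp_separates \<alpha> k A0 (f ` A0) \<longleftrightarrow> (0 \<le> k \<and> k < K) \<or> (K \<le> k \<and> k < 0)"
proof -
  obtain q where q: "q \<in> A0" using base_alcove_nonempty by blast
  have A0: "-1 < \<alpha> \<bullet> p \<and> \<alpha> \<bullet> p < 0" if "p \<in> A0" for p
    using that assms(3) by (auto simp: base_alcove_def)
  have fA0: "of_int K - 1 < \<alpha> \<bullet> f p \<and> \<alpha> \<bullet> f p < of_int K" if "p \<in> A0" for p
    using alcove_k_bounds[OF assms(1,2) that] K by simp
  show ?thesis
  proof
    assume sep: "hyp_separates \<alpha> k A0 (f ` A0)"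
    show "(0 \<le> k \<and> k < K) \<or> (K \<le> k \<and> k < 0)"
    proof (cases "\<alpha> \<bullet> q < k")
      case True
      then have "\<alpha> \<bullet> f q > k" using sep q unfolding hyp_separates_def by auto
      then have "-1 < real_of_int k" "real_of_int k < K" using True A0[OF q] fA0[OF q] by linarith+
      then show ?thesis by linarith
    next
      case False
      then have "\<alpha> \<bullet> f q < k" "\<alpha> \<bullet> q > k" using sep q unfolding hyp_separates_def by auto
      then have "real_of_int k < 0" "real_of_int K - 1 < k" using A0[OF q] fA0[OF q] by linarith+
      then show ?thesis by linarith
    qed
  next
    assume "(0 \<le> k \<and> k < K) \<or> (K \<le> k \<and> k < 0)"
    then consider "real_of_int k \<ge> 0" "real_of_int k \<le> real_of_int K - 1"
      | "real_of_int k \<le> -1" "real_of_int k \<ge> real_of_int K" by linarith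
    then show "hyp_separates \<alpha> k A0 (f ` A0)"
    proof cases
      case 1
      then have "(\<forall>p\<in>A0. \<alpha> \<bullet> p < k) \<and> (\<forall>v\<in>f ` A0. \<alpha> \<bullet> v > k)" using A0 fA0 by fastforce
      then show ?thesis unfolding hyp_separates_def by blast
    next
      case 2
      then have "(\<forall>p\<in>A0. \<alpha> \<bullet> p > k) \<and> (\<forall>v\<in>f ` A0. \<alpha> \<bullet> v < k)" using A0 fA0 by fastforce
      then show ?thesis unfolding hyp_separates_def by blast
    qed
  qed
qed

lemma iw_length_eq_sum:
  assumes "\<And>\<alpha>. \<alpha> \<in> P \<Longrightarrow> \<exists>\<beta> c. \<beta> \<in> R \<and> root_pullback f \<alpha> \<beta> c"
  shows "int (iw_length P f) = (\<Sum>\<alpha>\<in>P. \<bar>alcove_k \<alpha> (f ` A0)\<bar>)"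
proof -
  have levels: "{k. hyp_separates \<alpha> k A0 (f ` A0)} = {min 0 K ..< max 0 K}"
    if "\<alpha> \<in> P" "alcove_k \<alpha> (f ` A0) = K" for \<alpha> K
  proof -
    have "k \<in> {min 0 K ..< max 0 K} \<longleftrightarrow> (0 \<le> k \<and> k < K) \<or> (K \<le> k \<and> k < 0)" for k
      by (simp add: min_def max_def) arith
    then show ?thesis using assms[OF that(1)] hyp_separates_base_iff that by blast
  qed
  have "{(a, k). a \<in> P \<and> hyp_separates a k A0 (f ` A0)} = Sigma P (\<lambda>a. {k. hyp_separates a k A0 (f ` A0)})"
    by auto
  then have "iw_length P f = (\<Sum>a\<in>P. card {k. hyp_separates a k A0 (f ` A0)})"
    unfolding iw_length_def using finite_positive levels by (simp add: card_SigmaI)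
  also have "\<dots> = (\<Sum>a\<in>P. nat \<bar>alcove_k a (f ` A0)\<bar>)"
    using levels by (intro sum.cong) (auto simp: max_def min_def)
  finally show ?thesis by simp
qed

lemma lattice_zero: "0 \<in> L"
  and lattice_add: "x \<in> L \<Longrightarrow> y \<in> L \<Longrightarrow> x + y \<in> L"
  and lattice_uminus: "x \<in> L \<Longrightarrow> - x \<in> L"
  and lattice_inner_root: "t \<in> L \<Longrightarrow> a \<in> R \<Longrightarrow> a \<bullet> t \<in> \<int>"
  and coroot_lattice_subset: "coroot_lattice R \<subseteq> L"
  using datum by (simp_all add: iw_datum_def admissible_lattice_def)

lemma lattice_diff: "x \<in> L \<Longrightarrow> y \<in> L \<Longrightarrow> x - y \<in> L"
  using lattice_add lattice_uminus by (metis diff_conv_add_uminus)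

lemma lattice_int_scaleR: "x \<in> L \<Longrightarrow> of_int n *\<^sub>R x \<in> L"
proof (induction n rule: int_induct[where k = 0])
  case (step1 i)
  then show ?case by (simp add: scaleR_add_left lattice_add)
next
  case (step2 i)
  then show ?case by (simp add: scaleR_diff_left lattice_diff)
qed (simp add: lattice_zero)

lemma coroot_in_lattice: "a \<in> R \<Longrightarrow> coroot a \<in> L"
proof -
  assume a: "a \<in> R"
  have "coroot a = (\<Sum>b\<in>R. of_int (if b = a then 1 else 0) *\<^sub>R coroot b)"
    using a finite_roots by (simp add: if_distrib[of "\<lambda>n. of_int n *\<^sub>R _"] sum.delta' cong: if_cong)
  then have "coroot a \<in> coroot_lattice R"
    unfolding coroot_lattice_def by (intro CollectI exI[of _ "\<lambda>b. if b = a then (1::int) else 0"])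
  then show ?thesis using coroot_lattice_subset by blast
qed

lemma root_refl_lattice:
  assumes "a \<in> R" "t \<in> L"
  shows "root_refl a t \<in> L"
proof -
  obtain n where "a \<bullet> t = of_int n" using lattice_inner_root[OF assms(2,1)] by (blast elim: Ints_cases)
  then show ?thesis
    unfolding root_refl_eq_coroot
    using lattice_diff[OF assms(2) lattice_int_scaleR[OF coroot_in_lattice[OF assms(1)]]] by simp
qed

lemma root_refl_image_roots: "a \<in> R \<Longrightarrow> root_refl a ` R = R"
  by (rule image_eq_of_involution) (auto simp: root_refl_root_refl root_nonzero root_refl_root)

lemma root_refl_image_lattice: "a \<in> R \<Longrightarrow> root_refl a ` L = L"
  by (rule image_eq_of_involution) (auto simp: root_refl_root_refl root_nonzero root_refl_lattice)

lemma refl_group_symmetries: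
  "u \<in> refl_group A \<Longrightarrow> A \<subseteq> R \<Longrightarrow> orthogonal_transformation u \<and> u ` R = R \<and> u ` L = L"
proof (induction rule: refl_group.induct)
  case id_in
  then show ?case by (simp add: orthogonal_transformation_def linear_id)
next
  case (step a u)
  then have a: "a \<in> R" by auto
  have "orthogonal_transformation (root_refl a \<circ> u)"
    using step orthogonal_transformation_root_refl[OF root_nonzero[OF a]]
      orthogonal_transformation_compose by blast
  moreover have "(root_refl a \<circ> u) ` R = R" "(root_refl a \<circ> u) ` L = L"
    using step root_refl_image_roots[OF a] root_refl_image_lattice[OF a]
      image_comp[of "root_refl a" u R] image_comp[of "root_refl a" u L] by simp_all
  ultimately show ?case by blast
qed

lemma orthogonal_sigma: "orthogonal_transformation \<sigma>"
  and sigma_roots: "\<sigma> ` R = R"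
  and sigma_lattice: "\<sigma> ` L = L"
  and sigma_base_alcove: "\<sigma> ` A0 = A0"
  using datum by (simp_all add: iw_datum_def orthogonal_transformation)

lemma bij_sigma: "bij \<sigma>"
  using orthogonal_sigma orthogonal_transformation_bij by blast

lemma sigma_inv_sigma [simp]: "\<sigma> (inv \<sigma> x) = x"
  and inv_sigma_sigma [simp]: "inv \<sigma> (\<sigma> x) = x"
  using bij_sigma by (simp_all add: bij_is_surj surj_f_inv_f bij_is_inj)

lemma inv_sigma_image: "\<sigma> ` S = S \<Longrightarrow> inv \<sigma> ` S = S"
  using image_inv_f_f[OF bij_is_inj[OF bij_sigma], of S] by simp

lemma orthogonal_positive:
  assumes f: "orthogonal_transformation f" "f ` R \<subseteq> R" "f ` A0 \<subseteq> A0" and a: "a \<in> P"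
  shows "f a \<in> P"
proof (rule ccontr)
  assume "f a \<notin> P"
  obtain v where v: "v \<in> A0" using base_alcove_nonempty by blast
  have "a \<in> R" "f a \<in> R" "f v \<in> A0" using f a v positive_roots by auto
  then have "a \<bullet> v < 0" "f a \<bullet> f v > 0"
    using base_alcove_bounds[OF v \<open>a \<in> R\<close>] base_alcove_bounds[OF \<open>f v \<in> A0\<close> \<open>f a \<in> R\<close>]
      a \<open>f a \<notin> P\<close> by simp_all
  moreover have "f a \<bullet> f v = a \<bullet> v" using f(1) by (simp add: orthogonal_transformation_def)
  ultimately show False by simp
qed

section \<open>Positive roots outside a parabolic subsystem\<close>

lemma root_diff_in_roots:
  assumes a: "a \<in> R" and b: "b \<in> R" and ab: "a \<bullet> b > 0" and not_parallel: "\<forall>k. b \<noteq> k *\<^sub>R a"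
  shows "b - a \<in> R"
proof -
  have pos: "a \<bullet> a > 0" "b \<bullet> b > 0" using inner_root_self_pos a b by auto
  obtain i j :: int where i: "2 * (a \<bullet> b) / (a \<bullet> a) = of_int i" and j: "2 * (b \<bullet> a) / (b \<bullet> b) = of_int j"
    using cartan_integer a b by metis
  have "of_int i > (0::real)" "of_int j > (0::real)"
    unfolding i[symmetric] j[symmetric] using ab pos by (simp_all add: inner_commute)
  then have "i > 0" "j > 0" by simp_all
  have "of_int (i * j) = (2 * (a \<bullet> b) / (a \<bullet> a)) * (2 * (b \<bullet> a) / (b \<bullet> b))"
    using i j by simp
  also have "\<dots> = 4 * ((a \<bullet> b) * (a \<bullet> b)) / ((a \<bullet> a) * (b \<bullet> b))"
    by (simp add: inner_commute)
  also have "\<dots> < 4"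
    using strict_Cauchy_Schwarz[OF root_nonzero[OF a] not_parallel] pos by (simp add: divide_less_eq)
  finally have "i * j < 4" by linarith
  then have "i = 1 \<or> j = 1"
    using \<open>i > 0\<close> \<open>j > 0\<close> mult_mono[of 2 i 2 j] by (cases "i \<ge> 2 \<and> j \<ge> 2") auto
  then show ?thesis
  proof
    assume "i = 1"
    then have "root_refl a b = b - a" unfolding root_refl_def using i ab by simp
    then show ?thesis using root_refl_root[OF a b] by simp
  next
    assume "j = 1"
    then have "root_refl b a = a - b" unfolding root_refl_def using j ab by (simp add: inner_commute)
    then show ?thesis using root_refl_root[OF b a] uminus_root by fastforce
  qed
qed

lemma simple_rootD: "a \<in> simple_roots P \<Longrightarrow> a \<in> P \<and> \<not> (\<exists>b\<in>P. \<exists>c\<in>P. a = b + c)"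
  unfolding simple_roots_def by blast

lemma positive_minus_simple:
  assumes a: "a \<in> simple_roots P" and x: "x \<in> P" "x \<bullet> a > 0" "\<forall>k. x \<noteq> k *\<^sub>R a"
  shows "x - a \<in> P"
proof (rule ccontr)
  assume "x - a \<notin> P"
  have aR: "a \<in> R" and xR: "x \<in> R" using a x simple_rootD positive_roots by blast+
  have "x - a \<in> R" using root_diff_in_roots[OF aR xR] x by (simp add: inner_commute)
  then have "a - x \<in> P" using uminus_positive \<open>x - a \<notin> P\<close> by fastforce
  moreover have "a = (a - x) + x" by simp
  ultimately show False using simple_rootD[OF a] x(1) by blast
qed

lemma positive_sum_ne_simple_multiple:
  assumes J: "J \<subseteq> simple_roots P" and aJ: "a \<in> J"
  shows "b \<in> P \<Longrightarrow> c \<in> P \<Longrightarrow> b \<notin> span J \<Longrightarrow> b + c \<noteq> of_nat n *\<^sub>R a"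
proof (induction n arbitrary: b c)
  case 0
  then have "c \<noteq> - b" using uminus_not_positive by blast
  then show ?case by (simp add: add_eq_0_iff)
next
  case (Suc n)
  have a: "a \<in> simple_roots P" using J aJ by blast
  then have aP: "a \<in> P" and aR: "a \<in> R" using simple_rootD positive_roots by blast+
  have a_span: "a \<in> span J" using aJ by (simp add: span_base)
  show ?case
  proof
    assume sum: "b + c = of_nat (Suc n) *\<^sub>R a"
    have "b \<bullet> a + c \<bullet> a = of_nat (Suc n) * (a \<bullet> a)"
      using arg_cong[OF sum, of "\<lambda>x. x \<bullet> a"] by (simp only: inner_add_left inner_scaleR_left)
    moreover have "of_nat (Suc n) * (a \<bullet> a) > 0" using inner_root_self_pos[OF aR] by simp
    ultimately consider "b \<bullet> a > 0" | "c \<bullet> a > 0" by linarith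
    then show False
    proof cases
      case 1
      have "\<forall>k. b \<noteq> k *\<^sub>R a" using Suc.prems(3) a_span span_mul by blast
      then have "b - a \<in> P" using positive_minus_simple[OF a Suc.prems(1) 1] by blast
      moreover have "b - a \<notin> span J" using Suc.prems(3) a_span span_add by fastforce
      moreover have "(b - a) + c = of_nat n *\<^sub>R a" using sum by (simp add: algebra_simps)
      ultimately show False using Suc.IH Suc.prems(2) by blast
    next
      case 2
      show False
      proof (cases "\<exists>k. c = k *\<^sub>R a")
        case True
        then obtain k where k: "c = k *\<^sub>R a" by blast
        then have "k = 1 \<or> k = -1" using root_multiple[OF aR] Suc.prems(2) positive_roots by auto
        moreover have "b = of_nat n *\<^sub>R a" if "k = 1" using k sum that by (simp add: algebra_simps)
        ultimately show False
          using k Suc.prems(2,3) aP uminus_not_positive a_span span_mul by fastforce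
      next
        case False
        then have "c - a \<in> P" using positive_minus_simple[OF a Suc.prems(2) 2] by blast
        moreover have "b + (c - a) = of_nat n *\<^sub>R a" using sum by (simp add: algebra_simps)
        ultimately show False using Suc.IH Suc.prems(1,3) by blast
      qed
    qed
  qed
qed

lemma root_refl_simple_positive:
  assumes J: "J \<subseteq> simple_roots P" and aJ: "a \<in> J" and b: "b \<in> P" "b \<notin> span J"
  shows "root_refl a b \<in> P"
proof (rule ccontr)
  assume not_pos: "root_refl a b \<notin> P"
  have aP: "a \<in> P" using simple_rootD J aJ by blast
  have aR: "a \<in> R" and bR: "b \<in> R" using aP b positive_roots by auto
  define c where "c = - root_refl a b"
  have cP: "c \<in> P" unfolding c_def using uminus_positive[OF root_refl_root[OF aR bR] not_pos] .
  obtain k :: int where k: "2 * (a \<bullet> b) / (a \<bullet> a) = of_int k" using cartan_integer[OF aR bR] by blast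
  have bc: "b + c = of_int k *\<^sub>R a" unfolding c_def root_refl_def k[symmetric] by simp
  obtain g where g: "P = {a\<in>R. a \<bullet> g > 0}" using chamber_vector by blast
  have "(b + c) \<bullet> g > 0" "a \<bullet> g > 0" using b cP aP g by (auto simp: inner_add_left)
  then have "k > 0" using bc by (simp add: zero_less_mult_iff)
  then have "b + c = of_nat (nat k) *\<^sub>R a" using bc by simp
  then show False using positive_sum_ne_simple_multiple[OF J aJ b(1) cP b(2)] by blast
qed

definition positive_non_J :: "'v set \<Rightarrow> 'v set" where
  "positive_non_J J = P - (roots_J R J \<inter> P)"

lemma mem_positive_non_J: "b \<in> positive_non_J J \<longleftrightarrow> b \<in> P \<and> b \<notin> span J"
  unfolding positive_non_J_def roots_J_def using positive_roots by auto

lemma root_refl_image_positive_non_J: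
  assumes J: "J \<subseteq> simple_roots P" and aJ: "a \<in> J"
  shows "root_refl a ` positive_non_J J = positive_non_J J"
proof (rule image_eq_of_involution)
  have aR: "a \<in> R" using simple_rootD J aJ positive_roots by blast
  show "root_refl a (root_refl a x) = x" for x using root_refl_root_refl root_nonzero[OF aR] by blast
  show "root_refl a ` positive_non_J J \<subseteq> positive_non_J J"
  proof
    fix x assume "x \<in> root_refl a ` positive_non_J J"
    then obtain b where b: "b \<in> P" "b \<notin> span J" and x: "x = root_refl a b"
      by (auto simp: mem_positive_non_J)
    have "b = x + (2 * (a \<bullet> b) / (a \<bullet> a)) *\<^sub>R a" unfolding x root_refl_def by simp
    moreover have "(2 * (a \<bullet> b) / (a \<bullet> a)) *\<^sub>R a \<in> span J" using aJ by (simp add: span_base span_mul)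
    ultimately have "x \<notin> span J" using b(2) span_add by metis
    then show "x \<in> positive_non_J J"
      using root_refl_simple_positive[OF J aJ b] x by (simp add: mem_positive_non_J)
  qed
qed

lemma refl_group_image_positive_non_J:
  assumes J: "J \<subseteq> simple_roots P"
  shows "u \<in> refl_group J \<Longrightarrow> u ` positive_non_J J = positive_non_J J"
proof (induction rule: refl_group.induct)
  case (step a u)
  then show ?case
    using root_refl_image_positive_non_J[OF J step(1)] image_comp[of "root_refl a" u "positive_non_J J"]
    by simp
qed simp

lemma orthogonal_image_positive_non_J:
  assumes f: "orthogonal_transformation f" "f ` R = R" "f ` A0 = A0" "f ` J = J"
  shows "f ` positive_non_J J \<subseteq> positive_non_J J"
proof
  fix x assume "x \<in> f ` positive_non_J J"
  then obtain b where b: "b \<in> P" "b \<notin> span J" and x: "x = f b" by (auto simp: mem_positive_non_J)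
  have "f ` span J = span J" using span_linear_image[OF orthogonal_transformation_linear[OF f(1)], of J] f(4) by simp
  then have "x \<notin> span J" using b(2) x orthogonal_transformation_inj[OF f(1)] by (metis inj_image_mem_iff)
  then show "x \<in> positive_non_J J"
    using orthogonal_positive[OF f(1) _ _ b(1)] f(2,3) x by (simp add: mem_positive_non_J)
qed

lemma sigma_image_positive_non_J:
  assumes "\<sigma> ` J = J"
  shows "\<sigma> ` positive_non_J J = positive_non_J J"
proof
  show "\<sigma> ` positive_non_J J \<subseteq> positive_non_J J"
    using orthogonal_image_positive_non_J[OF orthogonal_sigma sigma_roots sigma_base_alcove assms] .
  have "inv \<sigma> ` positive_non_J J \<subseteq> positive_non_J J"
    using orthogonal_image_positive_non_J[OF orthogonal_transformation_inv[OF orthogonal_sigma]]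
      inv_sigma_image[OF sigma_roots] inv_sigma_image[OF sigma_base_alcove] inv_sigma_image[OF assms]
    by blast
  then show "positive_non_J J \<subseteq> \<sigma> ` positive_non_J J"
    using sigma_inv_sigma by (metis image_subset_iff subsetI image_eqI)
qed

section \<open>Walls of the base alcove\<close>

lemma root_pullback_aff_refl:
  assumes "2 * (\<beta> \<bullet> \<alpha>) / (\<beta> \<bullet> \<beta>) = of_int n"
  shows "root_pullback (aff_refl \<beta> m) \<alpha> (root_refl \<beta> \<alpha>) (m * n)"
  unfolding root_pullback_def
proof
  fix v
  have "\<alpha> \<bullet> aff_refl \<beta> m v = \<alpha> \<bullet> v - (\<beta> \<bullet> v - of_int m) * (2 * (\<beta> \<bullet> \<alpha>) / (\<beta> \<bullet> \<beta>))"
    unfolding aff_refl_def coroot_def by (simp add: inner_diff_right inner_commute)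
  also have "\<dots> = root_refl \<beta> \<alpha> \<bullet> v + of_int (m * n)"
    unfolding root_refl_def assms by (simp add: inner_diff_left algebra_simps inner_commute)
  finally show "\<alpha> \<bullet> aff_refl \<beta> m v = root_refl \<beta> \<alpha> \<bullet> v + of_int (m * n)" .
qed

lemma ex_root_pullback_aff_refl:
  "\<beta> \<in> R \<Longrightarrow> \<alpha> \<in> R \<Longrightarrow> \<exists>c. root_pullback (aff_refl \<beta> m) \<alpha> (root_refl \<beta> \<alpha>) c"
  using cartan_integer root_pullback_aff_refl by blast

lemma alcove_k_eq_ceiling:
  assumes "root_pullback f \<alpha> \<beta> c" "\<beta> \<in> R" "q \<in> A0"
  shows "alcove_k \<alpha> (f ` A0) = \<lceil>\<alpha> \<bullet> f q\<rceil>"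
  using alcove_k_bounds[OF assms] by (intro ceiling_unique[symmetric]) auto

text \<open>A point p of the wall lying on no other affine root hyperplane is fixed by the
  reflection; points of \<aa> close to p and their images lie in the same \<alpha>-strip as p.\<close>
lemma aff_refl_wall_other:
  assumes \<beta>: "\<beta> \<in> R" and wall: "is_wall R A0 \<beta> m" and \<alpha>: "\<alpha> \<in> R" "\<alpha> \<noteq> \<beta>" "\<alpha> \<noteq> - \<beta>"
  shows "alcove_k \<alpha> (aff_refl \<beta> m ` A0) = alcove_k \<alpha> A0"
proof -
  obtain p where p: "p \<in> closure A0" "\<beta> \<bullet> p = of_int m"
    and only_wall: "\<forall>b\<in>R. \<forall>n::int. b \<bullet> p = of_int n \<longrightarrow> (b = \<beta> \<and> n = m) \<or> (b = - \<beta> \<and> n = - m)"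
    using wall unfolding is_wall_def by blast
  define x where "x = \<alpha> \<bullet> p"
  define e where "e = min (x - (of_int \<lceil>x\<rceil> - 1)) (of_int \<lceil>x\<rceil> - x)"
  have "x \<noteq> of_int \<lceil>x\<rceil>" using only_wall \<alpha> unfolding x_def by blast
  moreover have "of_int \<lceil>x\<rceil> - 1 < x" "x \<le> of_int \<lceil>x\<rceil>" by linarith+
  ultimately have e: "e > 0" unfolding e_def by (simp add: less_le)
  have near: "\<lceil>z\<rceil> = \<lceil>x\<rceil>" if "\<bar>z - x\<bar> < e" for z
    using that unfolding e_def by (intro ceiling_unique) (auto simp: abs_less_iff)
  obtain q where q: "q \<in> A0" "dist q p < e / (norm \<alpha> + 1)"
    using p(1) e unfolding closure_approachable by (meson divide_pos_pos norm_ge_zero add_nonneg_pos zero_less_one)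
  have close: "\<bar>\<alpha> \<bullet> z - x\<bar> < e" if "norm (z - p) = norm (q - p)" for z
  proof -
    have "\<bar>\<alpha> \<bullet> z - x\<bar> \<le> norm \<alpha> * norm (z - p)"
      unfolding x_def inner_diff_right[symmetric] by (rule Cauchy_Schwarz_ineq2)
    also have "\<dots> \<le> norm \<alpha> * (e / (norm \<alpha> + 1))"
      using that q(2) by (intro mult_left_mono) (auto simp: dist_norm)
    also have "\<dots> < e"
      using e by (simp add: field_simps add_pos_nonneg mult_strict_left_mono)
    finally show ?thesis .
  qed
  have "aff_refl \<beta> m q - p = root_refl \<beta> (q - p)"
    using p(2) by (simp add: aff_refl_eq root_refl_eq_coroot algebra_simps)
  then have "norm (aff_refl \<beta> m q - p) = norm (q - p)"
    using orthogonal_transformation_norm[OF orthogonal_transformation_root_refl[OF root_nonzero[OF \<beta>]]] by simp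
  then have "\<lceil>\<alpha> \<bullet> aff_refl \<beta> m q\<rceil> = \<lceil>\<alpha> \<bullet> id q\<rceil>" using near close by simp
  moreover obtain c where "root_pullback (aff_refl \<beta> m) \<alpha> (root_refl \<beta> \<alpha>) c"
    using ex_root_pullback_aff_refl[OF \<beta> \<alpha>(1)] by blast
  ultimately show ?thesis
    using alcove_k_eq_ceiling[OF _ root_refl_root[OF \<beta> \<alpha>(1)] q(1)]
      alcove_k_eq_ceiling[OF root_pullback_id \<alpha>(1) q(1)] by simp
qed

lemma aff_refl_wall_self:
  assumes \<beta>: "\<beta> \<in> R" and wall: "is_wall R A0 \<beta> m"
  shows "\<bar>alcove_k \<beta> (aff_refl \<beta> m ` A0) - alcove_k \<beta> A0\<bar> = 1"
proof -
  obtain p where p: "p \<in> closure A0" "\<beta> \<bullet> p = of_int m"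
    using wall unfolding is_wall_def by blast
  have "2 * (\<beta> \<bullet> \<beta>) / (\<beta> \<bullet> \<beta>) = of_int 2" using inner_root_self_pos[OF \<beta>] by simp
  then have "root_pullback (aff_refl \<beta> m) \<beta> (- \<beta>) (m * 2)"
    using root_pullback_aff_refl root_refl_self[OF root_nonzero[OF \<beta>]] by metis
  then have k: "alcove_k \<beta> (aff_refl \<beta> m ` A0) = 2 * m + alcove_k (- \<beta>) A0"
    using alcove_k_pullback uminus_root[OF \<beta>] by simp
  have closure_strip: "closure A0 \<subseteq> {v. -1 \<le> b \<bullet> v} \<inter> {v. b \<bullet> v \<le> 0}" if "b \<in> P" for b
    using that by (intro closure_minimal closed_Int closed_halfspace_le closed_halfspace_ge)
      (auto simp: base_alcove_def less_imp_le)
  show ?thesis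
  proof (cases "\<beta> \<in> P")
    case True
    then have "-1 \<le> \<beta> \<bullet> p" "\<beta> \<bullet> p \<le> 0" using closure_strip p(1) by auto
    then have "m = -1 \<or> m = 0" using p(2) by linarith
    then show ?thesis
      using k True uminus_not_positive alcove_k_base \<beta> uminus_root[OF \<beta>] by auto
  next
    case False
    then have "- \<beta> \<in> P" using uminus_positive[OF \<beta>] by blast
    then have "-1 \<le> - \<beta> \<bullet> p" "- \<beta> \<bullet> p \<le> 0" using closure_strip[of "- \<beta>"] p(1) by blast+
    then have "m = 1 \<or> m = 0" using p(2) by simp linarith
    then show ?thesis
      using k False \<open>- \<beta> \<in> P\<close> alcove_k_base \<beta> uminus_root[OF \<beta>] by auto
  qed
qed

section \<open>Perturbing relative levels\<close>

lemma sum_positive_reindex: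
  fixes H :: "'v \<Rightarrow> int"
  assumes f: "orthogonal_transformation f" "f ` R = R" and even: "\<And>\<alpha>. \<alpha> \<in> R \<Longrightarrow> H (- \<alpha>) = H \<alpha>"
  shows "(\<Sum>\<alpha>\<in>P. H (f \<alpha>)) = (\<Sum>\<alpha>\<in>P. H \<alpha>)"
proof -
  define pos where "pos x = (if x \<in> P then x else - x)" for x
  have fR: "\<alpha> \<in> P \<Longrightarrow> f \<alpha> \<in> R" for \<alpha> using f(2) positive_roots by auto
  have H_pos: "x \<in> R \<Longrightarrow> H (pos x) = H x" for x unfolding pos_def using even by auto
  have f_uminus: "f (- b) = - f b" for b
    using linear_neg[OF orthogonal_transformation_linear[OF f(1)]] by blast
  have inj: "inj_on (pos \<circ> f) P"
  proof (rule inj_onI)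
    fix a b assume a: "a \<in> P" and b: "b \<in> P" and "(pos \<circ> f) a = (pos \<circ> f) b"
    then have "f a = f b \<or> f a = f (- b)"
      unfolding pos_def o_def f_uminus
      by (cases "f a \<in> P"; cases "f b \<in> P"; simp; metis minus_minus)
    then have "a = b \<or> a = - b" using orthogonal_transformation_inj[OF f(1)] by (auto dest: injD)
    then show "a = b" using a b uminus_not_positive by blast
  qed
  have "(pos \<circ> f) ` P = P"
    using endo_inj_surj[OF finite_positive _ inj] uminus_positive fR unfolding pos_def by auto
  then have "(\<Sum>\<alpha>\<in>P. H \<alpha>) = (\<Sum>\<alpha>\<in>P. H (pos (f \<alpha>)))"
    using sum.reindex[OF inj, of H] by simp
  also have "\<dots> = (\<Sum>\<alpha>\<in>P. H (f \<alpha>))" using H_pos fR by (intro sum.cong) auto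
  finally show ?thesis by simp
qed

text \<open>In the application g and g' are the relative levels \<open>k(\<alpha>, y\<sigma>B) - k(\<alpha>, B)\<close> for the alcoves
  B = \<aa> and B = s\<aa>, \<open>star \<alpha>\<close> is the linear part of the affine function \<open>\<alpha> \<circ> y\<sigma>\<close>, and
  \<open>d \<alpha> = k(\<alpha>, s\<aa>) - k(\<alpha>, \<aa>)\<close>, which vanishes away from the wall \<open>H\<^sub>\<beta>\<close> of s.\<close>
context
  fixes star :: "'v \<Rightarrow> 'v" and d g g' :: "'v \<Rightarrow> int" and \<beta> \<gamma> :: 'v and \<Phi> :: "'v set"
  assumes star_root: "\<And>\<alpha>. \<alpha> \<in> R \<Longrightarrow> star \<alpha> \<in> R"
    and star_uminus: "\<And>\<alpha>. \<alpha> \<in> R \<Longrightarrow> star (- \<alpha>) = - star \<alpha>"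
    and \<beta>: "\<beta> \<in> R" and \<gamma>: "\<gamma> \<in> R" and star_\<gamma>: "star \<gamma> = \<beta>"
    and star_eq_\<beta>: "\<And>\<alpha>. \<alpha> \<in> R \<Longrightarrow> star \<alpha> = \<beta> \<Longrightarrow> \<alpha> = \<gamma>"
    and d_\<beta>: "\<bar>d \<beta>\<bar> = 1" and d_uminus_\<beta>: "d (- \<beta>) = - d \<beta>"
    and d_other: "\<And>\<rho>. \<rho> \<in> R \<Longrightarrow> \<rho> \<noteq> \<beta> \<Longrightarrow> \<rho> \<noteq> - \<beta> \<Longrightarrow> d \<rho> = 0"
    and g'_eq: "\<And>\<alpha>. \<alpha> \<in> R \<Longrightarrow> g' \<alpha> = g \<alpha> + d (star \<alpha>) - d \<alpha>"
    and g_uminus: "\<And>\<alpha>. \<alpha> \<in> R \<Longrightarrow> g (- \<alpha>) = - g \<alpha>"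
    and g'_uminus: "\<And>\<alpha>. \<alpha> \<in> R \<Longrightarrow> g' (- \<alpha>) = - g' \<alpha>"
    and \<Phi>_roots: "\<Phi> \<subseteq> R" and \<Phi>_no_opposite: "\<And>\<alpha>. \<alpha> \<in> \<Phi> \<Longrightarrow> - \<alpha> \<notin> \<Phi>"
    and star_\<Phi>: "\<And>\<alpha>. \<alpha> \<in> R \<Longrightarrow> star \<alpha> \<in> \<Phi> \<longleftrightarrow> \<alpha> \<in> \<Phi>"
    and g_nonneg: "\<And>\<alpha>. \<alpha> \<in> \<Phi> \<Longrightarrow> g \<alpha> \<ge> 0"
begin

lemma star_uminus_\<gamma>: "star (- \<gamma>) = - \<beta>"
  using star_uminus[OF \<gamma>] star_\<gamma> by simp

lemma d_star_eq: "\<alpha> \<in> R \<Longrightarrow> d (star \<alpha>) = (if \<alpha> = \<gamma> then d \<beta> else if \<alpha> = - \<gamma> then - d \<beta> else 0)"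
proof -
  assume \<alpha>: "\<alpha> \<in> R"
  consider "\<alpha> = \<gamma>" | "\<alpha> = - \<gamma>" | "\<alpha> \<noteq> \<gamma>" "\<alpha> \<noteq> - \<gamma>" by blast
  then show ?thesis
  proof cases
    case 3
    have "star \<alpha> \<noteq> - \<beta>"
      using star_eq_\<beta>[OF uminus_root[OF \<alpha>]] star_uminus[OF \<alpha>] 3(2) by force
    then show ?thesis using star_eq_\<beta>[OF \<alpha>] d_other[OF star_root[OF \<alpha>]] 3 by auto
  qed (use star_\<gamma> star_uminus_\<gamma> d_uminus_\<beta> root_ne_uminus[OF \<gamma>] in auto)
qed

lemma level_change_off_walls: "\<alpha> \<in> R \<Longrightarrow> \<alpha> \<notin> {\<beta>, - \<beta>, \<gamma>, - \<gamma>} \<Longrightarrow> g' \<alpha> = g \<alpha>"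
  using g'_eq d_other d_star_eq by simp

lemma level_change_walls:
  assumes "\<gamma> \<noteq> \<beta>" "\<gamma> \<noteq> - \<beta>"
  shows "g' \<beta> = g \<beta> - d \<beta>" "g' \<gamma> = g \<gamma> + d \<beta>"
    and "g' (- \<beta>) = g (- \<beta>) + d \<beta>" "g' (- \<gamma>) = g (- \<gamma>) - d \<beta>"
proof -
  have "\<beta> \<noteq> - \<gamma>" using assms(2) by auto
  then show \<beta>_eq: "g' \<beta> = g \<beta> - d \<beta>" and \<gamma>_eq: "g' \<gamma> = g \<gamma> + d \<beta>"
    using g'_eq[OF \<beta>] g'_eq[OF \<gamma>] d_other[OF \<gamma>] d_star_eq[OF \<beta>] d_star_eq[OF \<gamma>] assms by auto
  show "g' (- \<beta>) = g (- \<beta>) + d \<beta>" "g' (- \<gamma>) = g (- \<gamma>) - d \<beta>"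
    using \<beta>_eq \<gamma>_eq g_uminus g'_uminus \<beta> \<gamma> by simp_all
qed

lemma sum_abs_levels_jump:
  assumes ne: "\<gamma> \<noteq> \<beta>" "\<gamma> \<noteq> - \<beta>"
    and signs: "d \<beta> * g \<beta> \<le> 0" "d \<beta> * g \<gamma> \<ge> 0"
  shows "(\<Sum>\<alpha>\<in>P. \<bar>g' \<alpha>\<bar>) = (\<Sum>\<alpha>\<in>P. \<bar>g \<alpha>\<bar>) + 2"
proof -
  define h where "h \<alpha> = \<bar>g' \<alpha>\<bar> - \<bar>g \<alpha>\<bar>" for \<alpha>
  define pos where "pos x = (if x \<in> P then x else - x)" for x
  have pos_cases: "x \<in> R \<Longrightarrow> pos x = x \<or> pos x = - x" "x \<in> R \<Longrightarrow> pos x \<in> P" for x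
    unfolding pos_def using uminus_positive by auto
  have h_pos: "\<alpha> \<in> R \<Longrightarrow> h (pos \<alpha>) = h \<alpha>" for \<alpha>
    using pos_cases[of \<alpha>] g_uminus g'_uminus unfolding h_def by (auto simp del: abs_minus_cancel)
  have "g' \<beta> = g \<beta> - d \<beta>" "g' \<gamma> = g \<gamma> + d \<beta>"
    using level_change_walls[OF ne] by simp_all
  moreover have "d \<beta> = 1 \<or> d \<beta> = -1" using d_\<beta> by arith
  ultimately have h_\<beta>: "h \<beta> = 1" and h_\<gamma>: "h \<gamma> = 1"
    unfolding h_def using signs by auto
  have pos_ne: "pos \<beta> \<noteq> pos \<gamma>"
    using pos_cases(1)[OF \<beta>] pos_cases(1)[OF \<gamma>] ne by (metis minus_minus)
  have h_zero: "h \<alpha> = 0" if "\<alpha> \<in> P - {pos \<beta>, pos \<gamma>}" for \<alpha>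
  proof -
    have "\<alpha> \<notin> {\<beta>, - \<beta>, \<gamma>, - \<gamma>}"
      using that uminus_not_positive unfolding pos_def by (auto split: if_splits)
    then show "h \<alpha> = 0" using level_change_off_walls that positive_roots unfolding h_def by auto
  qed
  have "(\<Sum>\<alpha>\<in>P. h \<alpha>) = (\<Sum>\<alpha>\<in>{pos \<beta>, pos \<gamma>}. h \<alpha>)"
    using finite_positive pos_cases(2)[OF \<beta>] pos_cases(2)[OF \<gamma>] h_zero
    by (intro sum.mono_neutral_right) auto
  also have "\<dots> = 2" using pos_ne h_pos[OF \<beta>] h_pos[OF \<gamma>] h_\<beta> h_\<gamma> by simp
  finally show ?thesis unfolding h_def by (simp add: sum_subtractf)
qed

lemma level_change_signs:
  assumes ne: "\<gamma> \<noteq> \<beta>" "\<gamma> \<noteq> - \<beta>"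
    and \<alpha>: "\<alpha> \<in> \<Phi>" "g' \<alpha> < 0" "\<alpha> \<in> {\<beta>, - \<beta>, \<gamma>, - \<gamma>}"
  shows "d \<beta> * g \<beta> \<le> 0 \<and> d \<beta> * g \<gamma> \<ge> 0"
proof -
  have d: "d \<beta> = 1 \<or> d \<beta> = -1" using d_\<beta> by arith
  have \<Phi>: "\<gamma> \<in> \<Phi> \<longleftrightarrow> \<beta> \<in> \<Phi>" "- \<gamma> \<in> \<Phi> \<longleftrightarrow> - \<beta> \<in> \<Phi>"
    using star_\<Phi>[OF \<gamma>] star_\<Phi>[OF uminus_root[OF \<gamma>]] star_\<gamma> star_uminus_\<gamma> by simp_all
  note walls = level_change_walls[OF ne]
  consider "\<alpha> = \<beta>" | "\<alpha> = - \<beta>" | "\<alpha> = \<gamma>" | "\<alpha> = - \<gamma>" using \<alpha>(3) by blast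
  then show ?thesis
  proof cases
    case 1
    then have "d \<beta> = 1" "g \<beta> = 0" "g \<gamma> \<ge> 0" using \<alpha> walls(1) g_nonneg \<Phi>(1) d by force+
    then show ?thesis by simp
  next
    case 2
    then have "d \<beta> = -1" "g \<beta> = 0" "g (- \<gamma>) \<ge> 0"
      using \<alpha> walls(3) g_nonneg[of "- \<beta>"] g_nonneg[of "- \<gamma>"] g_uminus[OF \<beta>] \<Phi>(2) d by force+
    then show ?thesis using g_uminus[OF \<gamma>] by simp
  next
    case 3
    then have "d \<beta> = -1" "g \<gamma> = 0" "g \<beta> \<ge> 0" using \<alpha> walls(2) g_nonneg \<Phi>(1) d by force+
    then show ?thesis by simp
  next
    case 4
    then have "d \<beta> = 1" "g \<gamma> = 0" "g (- \<beta>) \<ge> 0"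
      using \<alpha> walls(4) g_nonneg[of "- \<beta>"] g_nonneg[of "- \<gamma>"] g_uminus[OF \<gamma>] \<Phi>(2) d by force+
    then show ?thesis using g_uminus[OF \<beta>] by simp
  qed
qed

lemma level_change_nonneg:
  assumes len: "(\<Sum>\<alpha>\<in>P. \<bar>g' \<alpha>\<bar>) = (\<Sum>\<alpha>\<in>P. \<bar>g \<alpha>\<bar>)" and \<alpha>: "\<alpha> \<in> \<Phi>"
  shows "g' \<alpha> \<ge> 0"
proof (rule ccontr)
  assume "\<not> g' \<alpha> \<ge> 0"
  then have neg: "g' \<alpha> < 0" by simp
  have \<alpha>R: "\<alpha> \<in> R" using \<alpha> \<Phi>_roots by auto
  have walls: "\<alpha> \<in> {\<beta>, - \<beta>, \<gamma>, - \<gamma>}"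
    using level_change_off_walls[OF \<alpha>R] g_nonneg[OF \<alpha>] neg by fastforce
  consider "\<gamma> = \<beta>" | "\<gamma> = - \<beta>" | "\<gamma> \<noteq> \<beta>" "\<gamma> \<noteq> - \<beta>" by blast
  then show False
  proof cases
    case 1
    then have "d (star \<alpha>) = d \<alpha>"
      using d_star_eq[OF \<alpha>R] d_uminus_\<beta> d_other[OF \<alpha>R] by auto
    then show False using g'_eq[OF \<alpha>R] g_nonneg[OF \<alpha>] neg by simp
  next
    case 2
    then have "star \<beta> = - \<beta>" using star_uminus_\<gamma> by simp
    then have "\<beta> \<notin> \<Phi>" "- \<beta> \<notin> \<Phi>"
      using star_\<Phi>[OF \<beta>] \<Phi>_no_opposite by auto
    then show False using walls \<alpha> 2 by auto
  next
    case 3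
    then show False
      using sum_abs_levels_jump level_change_signs[OF 3 \<alpha> neg walls] len by simp
  qed
qed

end

end


section \<open>Conjugation by a simple affine reflection\<close>

locale iw_conjugation = iwahori_datum R P L \<sigma>
  for R P L :: "'v::euclidean_space set" and \<sigma> :: "'v \<Rightarrow> 'v" +
  fixes y s :: "'v \<Rightarrow> 'v" and t :: 'v and u :: "'v \<Rightarrow> 'v" and \<beta> :: 'v and m :: int
  assumes y_eq: "y = (\<lambda>v. t + u v)" and t_lattice: "t \<in> L" and u_weyl: "u \<in> refl_group R"
    and s_eq: "s = aff_refl \<beta> m" and \<beta>_root: "\<beta> \<in> R" and \<beta>_wall: "is_wall R A0 \<beta> m"
begin

definition star :: "'v \<Rightarrow> 'v" where
  "star = inv (u \<circ> \<sigma>)"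

definition relative_level :: "'v set \<Rightarrow> 'v \<Rightarrow> int" where
  "relative_level B \<alpha> = alcove_k \<alpha> ((y \<circ> \<sigma>) ` B) - alcove_k \<alpha> B"

lemma orthogonal_u: "orthogonal_transformation u" and u_roots: "u ` R = R" and u_lattice: "u ` L = L"
  using refl_group_symmetries[OF u_weyl] by simp_all

lemma orthogonal_u_sigma: "orthogonal_transformation (u \<circ> \<sigma>)"
  using orthogonal_u orthogonal_sigma orthogonal_transformation_compose by blast

lemma u_sigma_star [simp]: "u (\<sigma> (star x)) = x" and star_u_sigma [simp]: "star (u (\<sigma> x)) = x"
proof -
  have "bij (u \<circ> \<sigma>)" using orthogonal_transformation_bij[OF orthogonal_u_sigma] .
  then show "u (\<sigma> (star x)) = x" "star (u (\<sigma> x)) = x"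
    unfolding star_def using bij_inv_eq_iff by (metis comp_apply)+
qed

lemma star_root: "\<alpha> \<in> R \<Longrightarrow> star \<alpha> \<in> R"
proof -
  assume "\<alpha> \<in> R"
  then obtain x where "x \<in> R" "\<alpha> = u (\<sigma> x)" using u_roots sigma_roots by (metis image_eqI image_iff)
  then show ?thesis by simp
qed

lemma star_uminus: "star (- \<alpha>) = - star \<alpha>"
  using linear_neg[OF orthogonal_transformation_linear[OF orthogonal_transformation_inv[OF orthogonal_u_sigma]]]
  unfolding star_def by blast

text \<open>The floor is exact: \<open>\<alpha> \<bullet> t\<close> is an integer since t lies in the lattice.\<close>
lemma root_pullback_y_sigma:
  assumes "\<alpha> \<in> R"
  shows "root_pullback (y \<circ> \<sigma>) \<alpha> (star \<alpha>) \<lfloor>\<alpha> \<bullet> t\<rfloor>"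
  unfolding root_pullback_def
proof
  fix v
  have "\<alpha> \<bullet> u (\<sigma> v) = u (\<sigma> (star \<alpha>)) \<bullet> u (\<sigma> v)" by simp
  also have "\<dots> = star \<alpha> \<bullet> v"
    using orthogonal_u_sigma unfolding orthogonal_transformation_def comp_apply by blast
  finally show "\<alpha> \<bullet> (y \<circ> \<sigma>) v = star \<alpha> \<bullet> v + of_int \<lfloor>\<alpha> \<bullet> t\<rfloor>"
    using lattice_inner_root[OF t_lattice assms] y_eq by (simp add: inner_add_right Ints_def)
qed

lemma relative_level_eq:
  assumes "\<alpha> \<in> R" "root_pullback h (star \<alpha>) \<gamma> c" "\<gamma> \<in> R"
  shows "relative_level (h ` A0) \<alpha> = \<lfloor>\<alpha> \<bullet> t\<rfloor> + alcove_k (star \<alpha>) (h ` A0) - alcove_k \<alpha> (h ` A0)"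
  using alcove_k_comp[OF root_pullback_y_sigma[OF assms(1)] assms(2,3)]
  unfolding relative_level_def by (simp add: image_comp)

lemma relative_level_uminus:
  assumes "\<alpha> \<in> R" and pullbacks: "\<And>\<rho>. \<rho> \<in> R \<Longrightarrow> \<exists>\<gamma> c. \<gamma> \<in> R \<and> root_pullback h \<rho> \<gamma> c"
  shows "relative_level (h ` A0) (- \<alpha>) = - relative_level (h ` A0) \<alpha>"
proof -
  obtain \<gamma> c where \<gamma>: "\<gamma> \<in> R" "root_pullback h (star \<alpha>) \<gamma> c"
    using pullbacks[OF star_root[OF assms(1)]] by blast
  obtain \<gamma>' c' where \<gamma>': "\<gamma>' \<in> R" "root_pullback h \<alpha> \<gamma>' c'" using pullbacks[OF assms(1)] by blast
  have "\<lfloor>- \<alpha> \<bullet> t\<rfloor> = - \<lfloor>\<alpha> \<bullet> t\<rfloor>"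
    using lattice_inner_root[OF t_lattice assms(1)] by (auto elim: Ints_cases)
  then show ?thesis
    using relative_level_eq[OF assms(1) \<gamma>(2,1)] relative_level_eq[OF uminus_root[OF assms(1)]]
      root_pullback_uminus[OF \<gamma>(2)] uminus_root[OF \<gamma>(1)] star_uminus
      alcove_k_uminus[OF \<gamma>(2,1)] alcove_k_uminus[OF \<gamma>'(2,1)]
    by simp
qed

lemma root_pullback_s: "\<alpha> \<in> R \<Longrightarrow> \<exists>c. root_pullback s \<alpha> (root_refl \<beta> \<alpha>) c"
  using ex_root_pullback_aff_refl[OF \<beta>_root] s_eq by blast

lemma s_comp_s: "s \<circ> s = id"
  using aff_refl_aff_refl[OF root_nonzero[OF \<beta>_root]] s_eq by (simp add: fun_eq_iff)

lemma linpart_s: "linpart s = root_refl \<beta>"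
  using linpart_aff_refl s_eq by simp

definition s_translation :: 'v where
  "s_translation = of_int m *\<^sub>R coroot \<beta>"

lemma s_apply: "s x = root_refl \<beta> x + s_translation"
  unfolding s_eq s_translation_def by (rule aff_refl_eq)

lemma s_translation_lattice: "s_translation \<in> L"
  unfolding s_translation_def using lattice_int_scaleR[OF coroot_in_lattice[OF \<beta>_root]] .

lemma relative_level_base_uminus: "\<alpha> \<in> R \<Longrightarrow> relative_level A0 (- \<alpha>) = - relative_level A0 \<alpha>"
proof -
  assume "\<alpha> \<in> R"
  then have "relative_level (id ` A0) (- \<alpha>) = - relative_level (id ` A0) \<alpha>"
    by (rule relative_level_uminus) (use root_pullback_id in blast)
  then show ?thesis by simp
qed

lemma relative_level_s_uminus: "\<alpha> \<in> R \<Longrightarrow> relative_level (s ` A0) (- \<alpha>) = - relative_level (s ` A0) \<alpha>"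
  by (rule relative_level_uminus) (use root_pullback_s root_refl_root[OF \<beta>_root] in blast)+

lemma relative_level_s_eq:
  "\<alpha> \<in> R \<Longrightarrow> relative_level (s ` A0) \<alpha> = relative_level A0 \<alpha>
     + (alcove_k (star \<alpha>) (s ` A0) - alcove_k (star \<alpha>) A0) - (alcove_k \<alpha> (s ` A0) - alcove_k \<alpha> A0)"
proof -
  assume \<alpha>: "\<alpha> \<in> R"
  obtain c where "root_pullback s (star \<alpha>) (root_refl \<beta> (star \<alpha>)) c"
    using root_pullback_s[OF star_root[OF \<alpha>]] by blast
  then have "relative_level (s ` A0) \<alpha> = \<lfloor>\<alpha> \<bullet> t\<rfloor> + alcove_k (star \<alpha>) (s ` A0) - alcove_k \<alpha> (s ` A0)"
    using relative_level_eq[OF \<alpha>] root_refl_root[OF \<beta>_root star_root[OF \<alpha>]] by blast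
  moreover have "relative_level (id ` A0) \<alpha> = \<lfloor>\<alpha> \<bullet> t\<rfloor> + alcove_k (star \<alpha>) A0 - alcove_k \<alpha> A0"
    using relative_level_eq[OF \<alpha> root_pullback_id star_root[OF \<alpha>]] by simp
  ultimately show ?thesis by simp
qed

lemma alcove_k_s_other:
  "\<rho> \<in> R \<Longrightarrow> \<rho> \<noteq> \<beta> \<Longrightarrow> \<rho> \<noteq> - \<beta> \<Longrightarrow> alcove_k \<rho> (s ` A0) - alcove_k \<rho> A0 = 0"
  using aff_refl_wall_other[OF \<beta>_root \<beta>_wall] s_eq by simp

lemma alcove_k_s_wall: "\<bar>alcove_k \<beta> (s ` A0) - alcove_k \<beta> A0\<bar> = 1"
  using aff_refl_wall_self[OF \<beta>_root \<beta>_wall] s_eq by simp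

lemma alcove_k_s_uminus_wall:
  "alcove_k (- \<beta>) (s ` A0) - alcove_k (- \<beta>) A0 = - (alcove_k \<beta> (s ` A0) - alcove_k \<beta> A0)"
proof -
  obtain c where "root_pullback s \<beta> (root_refl \<beta> \<beta>) c" using root_pullback_s[OF \<beta>_root] by blast
  then have "alcove_k (- \<beta>) (s ` A0) = 1 - alcove_k \<beta> (s ` A0)"
    using alcove_k_uminus root_refl_root[OF \<beta>_root \<beta>_root] by blast
  moreover have "alcove_k (- \<beta>) A0 = 1 - alcove_k \<beta> A0"
    using alcove_k_uminus[OF root_pullback_id \<beta>_root] by simp
  ultimately show ?thesis by simp
qed

lemma image_y: "y ` A0 = (y \<circ> \<sigma>) ` A0"
  by (simp only: image_comp[symmetric] sigma_base_alcove)

lemma image_conj: "(s \<circ> y \<circ> frob \<sigma> s) ` A0 = (s \<circ> (y \<circ> \<sigma>) \<circ> s) ` A0"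
  by (simp only: frob_def image_comp[symmetric] inv_sigma_image[OF sigma_base_alcove])

lemma relative_level_conj:
  assumes "\<alpha> \<in> R"
  shows "alcove_k \<alpha> ((s \<circ> y \<circ> frob \<sigma> s) ` A0) - alcove_k \<alpha> A0 = relative_level (s ` A0) (root_refl \<beta> \<alpha>)"
proof -
  define \<alpha>' where "\<alpha>' = root_refl \<beta> \<alpha>"
  have \<alpha>': "\<alpha>' \<in> R" unfolding \<alpha>'_def using root_refl_root[OF \<beta>_root assms] .
  obtain c where c: "root_pullback s \<alpha> \<alpha>' c" using root_pullback_s[OF assms] unfolding \<alpha>'_def by blast
  obtain c' where c': "root_pullback s (star \<alpha>') (root_refl \<beta> (star \<alpha>')) c'"
    using root_pullback_s[OF star_root[OF \<alpha>']] by blast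
  obtain c'' where c'': "root_pullback s \<alpha>' (root_refl \<beta> \<alpha>') c''" using root_pullback_s[OF \<alpha>'] by blast
  have "alcove_k \<alpha> ((s \<circ> y \<circ> frob \<sigma> s) ` A0) = c + alcove_k \<alpha>' ((y \<circ> \<sigma> \<circ> s) ` A0)"
    unfolding image_conj
    using alcove_k_comp[OF c root_pullback_comp[OF root_pullback_y_sigma[OF \<alpha>'] c']]
      root_refl_root[OF \<beta>_root star_root[OF \<alpha>']] by (simp add: comp_assoc)
  moreover have "alcove_k \<alpha> A0 = c + alcove_k \<alpha>' (s ` A0)"
    using alcove_k_comp[OF c c'' root_refl_root[OF \<beta>_root \<alpha>']] s_comp_s by simp
  ultimately show ?thesis unfolding relative_level_def \<alpha>'_def by (simp add: image_comp)
qed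

lemma length_y: "int (iw_length P y) = (\<Sum>\<alpha>\<in>P. \<bar>relative_level A0 \<alpha>\<bar>)"
proof -
  have "int (iw_length P y) = int (iw_length P (y \<circ> \<sigma>))"
    unfolding iw_length_def image_y ..
  also have "\<dots> = (\<Sum>\<alpha>\<in>P. \<bar>alcove_k \<alpha> ((y \<circ> \<sigma>) ` A0)\<bar>)"
    using iw_length_eq_sum root_pullback_y_sigma star_root positive_roots by blast
  also have "\<dots> = (\<Sum>\<alpha>\<in>P. \<bar>relative_level A0 \<alpha>\<bar>)"
    using alcove_k_base positive_roots unfolding relative_level_def by (intro sum.cong) auto
  finally show ?thesis .
qed

lemma length_conj: "int (iw_length P (s \<circ> y \<circ> frob \<sigma> s)) = (\<Sum>\<alpha>\<in>P. \<bar>relative_level (s ` A0) \<alpha>\<bar>)"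
proof -
  have pullbacks: "\<exists>\<gamma> c. \<gamma> \<in> R \<and> root_pullback (s \<circ> (y \<circ> \<sigma>) \<circ> s) \<alpha> \<gamma> c"
    if \<alpha>: "\<alpha> \<in> R" for \<alpha>
  proof -
    define \<alpha>' where "\<alpha>' = star (root_refl \<beta> \<alpha>)"
    have \<alpha>': "\<alpha>' \<in> R" unfolding \<alpha>'_def using star_root root_refl_root[OF \<beta>_root \<alpha>] by blast
    obtain c where "root_pullback s \<alpha> (root_refl \<beta> \<alpha>) c" using root_pullback_s[OF \<alpha>] by blast
    moreover obtain c' where "root_pullback s \<alpha>' (root_refl \<beta> \<alpha>') c'" using root_pullback_s[OF \<alpha>'] by blast
    ultimately show ?thesis
      using root_pullback_comp root_pullback_y_sigma[OF root_refl_root[OF \<beta>_root \<alpha>]]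
        root_refl_root[OF \<beta>_root \<alpha>'] unfolding \<alpha>'_def by blast
  qed
  have "int (iw_length P (s \<circ> y \<circ> frob \<sigma> s)) = int (iw_length P (s \<circ> (y \<circ> \<sigma>) \<circ> s))"
    unfolding iw_length_def image_conj ..
  also have "\<dots> = (\<Sum>\<alpha>\<in>P. \<bar>alcove_k \<alpha> ((s \<circ> y \<circ> frob \<sigma> s) ` A0)\<bar>)"
    unfolding image_conj using iw_length_eq_sum pullbacks positive_roots by blast
  also have "\<dots> = (\<Sum>\<alpha>\<in>P. \<bar>relative_level (s ` A0) (root_refl \<beta> \<alpha>)\<bar>)"
    using relative_level_conj alcove_k_base positive_roots by (intro sum.cong) force+
  also have "\<dots> = (\<Sum>\<alpha>\<in>P. \<bar>relative_level (s ` A0) \<alpha>\<bar>)"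
    using sum_positive_reindex[OF orthogonal_transformation_root_refl[OF root_nonzero[OF \<beta>_root]]
        root_refl_image_roots[OF \<beta>_root], of "\<lambda>\<alpha>. \<bar>relative_level (s ` A0) \<alpha>\<bar>"]
      relative_level_s_uminus by simp
  finally show ?thesis .
qed

end


locale iw_conjugation_parabolic = iw_conjugation R P L \<sigma> y s t u \<beta> m
  for R P L :: "'v::euclidean_space set" and \<sigma> y s :: "'v \<Rightarrow> 'v" and t u \<beta> m +
  fixes J :: "'v set" and w u' :: "'v \<Rightarrow> 'v" and t' :: 'v
  assumes J_simple: "J \<subseteq> simple_roots P" and sigma_J: "\<sigma> ` J = J" and w_weyl: "w \<in> refl_group R"
    and decomposition: "inv w \<circ> y \<circ> frob \<sigma> w = (\<lambda>v. t' + u' v)"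
    and t'_lattice: "t' \<in> L" and u'_weyl: "u' \<in> refl_group J"
begin

lemma orthogonal_w: "orthogonal_transformation w" and w_roots: "w ` R = R" and w_lattice: "w ` L = L"
  using refl_group_symmetries[OF w_weyl] by simp_all

lemma orthogonal_u': "orthogonal_transformation u'"
proof -
  have "J \<subseteq> R" using J_simple simple_rootD positive_roots by blast
  then show ?thesis using refl_group_symmetries[OF u'_weyl] by blast
qed

lemma w_inv_w [simp]: "w (inv w x) = x"
  using orthogonal_transformation_bij[OF orthogonal_w] by (simp add: bij_is_surj surj_f_inv_f)

lemma decomposition_components: "t = w t'" "u (\<sigma> (w x)) = w (u' (\<sigma> x))"
proof -
  have lin: "linear w" "linear u" "linear u'" "linear \<sigma>"
    using orthogonal_w orthogonal_u orthogonal_u' orthogonal_sigma orthogonal_transformation_linear by blast+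
  have "inv w (t + u (\<sigma> (w (inv \<sigma> v)))) = t' + u' v" for v
    using fun_cong[OF decomposition, of v] y_eq unfolding frob_def by simp
  then have eq: "t + u (\<sigma> (w (inv \<sigma> v))) = w t' + w (u' v)" for v
    using linear_add[OF lin(1)] by (metis w_inv_w)
  have "inv \<sigma> 0 = 0" using inv_sigma_sigma[of 0] linear_0[OF lin(4)] by simp
  then show "t = w t'" using eq[of 0] lin by (simp add: linear_0)
  then show "u (\<sigma> (w x)) = w (u' (\<sigma> x))" using eq[of "\<sigma> x"] by simp
qed

definition \<Phi> :: "'v set" where
  "\<Phi> = w ` positive_non_J J"

lemma \<Phi>_roots: "\<Phi> \<subseteq> R"
proof -
  have "positive_non_J J \<subseteq> R" using positive_roots mem_positive_non_J by blast
  then show ?thesis unfolding \<Phi>_def using w_roots by blast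
qed

lemma \<Phi>_no_opposite: "\<alpha> \<in> \<Phi> \<Longrightarrow> - \<alpha> \<notin> \<Phi>"
proof
  assume "\<alpha> \<in> \<Phi>" "- \<alpha> \<in> \<Phi>"
  then obtain b b' where b: "b \<in> P" "b' \<in> P" "\<alpha> = w b" "- \<alpha> = w b'"
    unfolding \<Phi>_def by (auto simp: mem_positive_non_J)
  then have "w (- b) = w b'"
    using linear_neg[OF orthogonal_transformation_linear[OF orthogonal_w]] by simp
  then have "- b = b'" using orthogonal_transformation_inj[OF orthogonal_w] by (auto dest: injD)
  then show False using b uminus_not_positive by blast
qed

lemma u_sigma_image_\<Phi>: "(u \<circ> \<sigma>) ` \<Phi> = \<Phi>"
proof -
  have "u \<circ> \<sigma> \<circ> w = w \<circ> u' \<circ> \<sigma>" using decomposition_components(2) by (simp add: fun_eq_iff)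
  then have "(u \<circ> \<sigma>) ` \<Phi> = w ` u' ` \<sigma> ` positive_non_J J"
    unfolding \<Phi>_def image_comp by simp
  then show ?thesis
    unfolding \<Phi>_def using sigma_image_positive_non_J[OF sigma_J]
      refl_group_image_positive_non_J[OF J_simple u'_weyl] by simp
qed

lemma star_\<Phi>: "star \<alpha> \<in> \<Phi> \<longleftrightarrow> \<alpha> \<in> \<Phi>"
proof
  assume "star \<alpha> \<in> \<Phi>"
  then have "u (\<sigma> (star \<alpha>)) \<in> (u \<circ> \<sigma>) ` \<Phi>" by (metis comp_apply image_eqI)
  then show "\<alpha> \<in> \<Phi>" using u_sigma_image_\<Phi> by simp
next
  assume "\<alpha> \<in> \<Phi>"
  then obtain x where "x \<in> \<Phi>" "\<alpha> = u (\<sigma> x)" using u_sigma_image_\<Phi> by (metis comp_apply imageE)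
  then show "star \<alpha> \<in> \<Phi>" by simp
qed

lemma relative_level_s_nonneg:
  assumes len: "iw_length P (s \<circ> y \<circ> frob \<sigma> s) = iw_length P y"
    and y_nonneg: "\<And>\<alpha>. \<alpha> \<in> \<Phi> \<Longrightarrow> relative_level A0 \<alpha> \<ge> 0" and \<alpha>: "\<alpha> \<in> \<Phi>"
  shows "relative_level (s ` A0) \<alpha> \<ge> 0"
proof (rule level_change_nonneg[where star = star and \<gamma> = "u (\<sigma> \<beta>)" and \<Phi> = \<Phi>
      and d = "\<lambda>\<rho>. alcove_k \<rho> (s ` A0) - alcove_k \<rho> A0"])
  show "\<beta> \<in> R" "u (\<sigma> \<beta>) \<in> R" "star (u (\<sigma> \<beta>)) = \<beta>"
    using \<beta>_root u_roots sigma_roots by auto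
  show "\<alpha>' = u (\<sigma> \<beta>)" if "\<alpha>' \<in> R" "star \<alpha>' = \<beta>" for \<alpha>'
    using that(2) u_sigma_star by metis
  show "(\<Sum>\<alpha>\<in>P. \<bar>relative_level (s ` A0) \<alpha>\<bar>) = (\<Sum>\<alpha>\<in>P. \<bar>relative_level A0 \<alpha>\<bar>)"
    using len length_y length_conj by simp
  show "relative_level (s ` A0) \<alpha>' = relative_level A0 \<alpha>'
      + (alcove_k (star \<alpha>') (s ` A0) - alcove_k (star \<alpha>') A0) - (alcove_k \<alpha>' (s ` A0) - alcove_k \<alpha>' A0)"
    if "\<alpha>' \<in> R" for \<alpha>'
    using relative_level_s_eq[OF that] .
qed (use star_root star_uminus alcove_k_s_wall alcove_k_s_uminus_wall alcove_k_s_other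
    relative_level_base_uminus relative_level_s_uminus \<Phi>_roots \<Phi>_no_opposite star_\<Phi> y_nonneg \<alpha>
    in \<open>simp_all only: not_False_eq_True\<close>)

lemma conj_translation_lattice:
  "inv w (t + u (\<sigma> s_translation) + root_refl \<beta> s_translation) \<in> L"
proof -
  have "\<sigma> s_translation \<in> L" using s_translation_lattice sigma_lattice by blast
  then have "u (\<sigma> s_translation) \<in> L" using u_lattice by blast
  moreover have "root_refl \<beta> s_translation \<in> L" using root_refl_lattice[OF \<beta>_root s_translation_lattice] .
  ultimately have "t + u (\<sigma> s_translation) + root_refl \<beta> s_translation \<in> L" using t_lattice lattice_add by simp
  then have "inv w (t + u (\<sigma> s_translation) + root_refl \<beta> s_translation) \<in> inv w ` L" by (rule imageI)
  moreover have "inv w ` L = L"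
    using image_inv_f_f[OF orthogonal_transformation_inj[OF orthogonal_w], of L] w_lattice by simp
  ultimately show ?thesis by simp
qed

lemma conj_decomposition:
  "inv (linpart s \<circ> w) \<circ> (s \<circ> y \<circ> frob \<sigma> s) \<circ> frob \<sigma> (linpart s \<circ> w) \<in> iw_sub L (refl_group J)"
proof -
  define r where "r = root_refl \<beta>"
  define \<mu> where "\<mu> = s_translation"
  define T where "T = inv w (t + u (\<sigma> \<mu>) + r \<mu>)"
  define W where "W = r \<circ> w"
  have s_r: "s x = r x + \<mu>" for x unfolding r_def \<mu>_def by (rule s_apply)
  have r_r [simp]: "r (r x) = x" for x unfolding r_def using root_refl_root_refl[OF root_nonzero[OF \<beta>_root]] .
  have lin: "linear r" "linear w" "linear u" "linear \<sigma>"
    unfolding r_def using linear_root_refl orthogonal_w orthogonal_u orthogonal_sigma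
    by (auto intro: orthogonal_transformation_linear)
  have W: "inj W" unfolding W_def r_def
    using orthogonal_transformation_inj[OF orthogonal_transformation_root_refl[OF root_nonzero[OF \<beta>_root]]]
      orthogonal_transformation_inj[OF orthogonal_w] by (simp add: inj_compose)
  have "(s \<circ> y \<circ> frob \<sigma> s) (frob \<sigma> W v) = W (T + u' v)" for v
  proof -
    define x where "x = inv \<sigma> v"
    have "s (W x) = w x + \<mu>" unfolding W_def by (simp add: s_r)
    then have "(s \<circ> y \<circ> frob \<sigma> s) (frob \<sigma> W v) = s (y (\<sigma> (w x + \<mu>)))"
      unfolding frob_def x_def by simp
    also have "y (\<sigma> (w x + \<mu>)) = t + w (u' v) + u (\<sigma> \<mu>)"
      unfolding y_eq x_def using linear_add[OF lin(4)] linear_add[OF lin(3)] decomposition_components(2)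
      by (simp add: algebra_simps)
    also have "s (t + w (u' v) + u (\<sigma> \<mu>)) = W (T + u' v)"
    proof -
      have "w (T + u' v) = r \<mu> + (t + w (u' v) + u (\<sigma> \<mu>))"
        unfolding T_def linear_add[OF lin(2)] by (simp add: algebra_simps)
      then show ?thesis unfolding s_r W_def comp_apply by (simp add: linear_add[OF lin(1)] algebra_simps)
    qed
    finally show ?thesis .
  qed
  then have "inv W \<circ> (s \<circ> y \<circ> frob \<sigma> s) \<circ> frob \<sigma> W = (\<lambda>v. T + u' v)"
    using inv_f_f[OF W] by (simp add: fun_eq_iff)
  moreover have "T \<in> L" unfolding T_def r_def \<mu>_def by (rule conj_translation_lattice)
  ultimately show ?thesis
    unfolding iw_sub_def linpart_s W_def r_def using u'_weyl by blast
qed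

lemma conj_alcove_levels:
  assumes len: "iw_length P (s \<circ> y \<circ> frob \<sigma> s) = iw_length P y"
    and y_levels: "\<forall>a\<in>w ` positive_non_J J. alcove_k a (y ` A0) \<ge> alcove_k a A0"
  shows "\<forall>a\<in>(linpart s \<circ> w) ` positive_non_J J. alcove_k a ((s \<circ> y \<circ> frob \<sigma> s) ` A0) \<ge> alcove_k a A0"
proof
  fix a assume "a \<in> (linpart s \<circ> w) ` positive_non_J J"
  then obtain b where b: "b \<in> \<Phi>" and a: "a = root_refl \<beta> b" unfolding \<Phi>_def linpart_s by auto
  have "relative_level A0 \<alpha> \<ge> 0" if "\<alpha> \<in> \<Phi>" for \<alpha>
    using y_levels that unfolding \<Phi>_def relative_level_def image_y by auto
  then have "relative_level (s ` A0) b \<ge> 0" using relative_level_s_nonneg[OF len _ b] by blast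
  moreover have "root_refl \<beta> a = b" unfolding a using root_refl_root_refl[OF root_nonzero[OF \<beta>_root]] .
  moreover have "a \<in> R" unfolding a using root_refl_root[OF \<beta>_root] \<Phi>_roots b by blast
  ultimately show "alcove_k a ((s \<circ> y \<circ> frob \<sigma> s) ` A0) \<ge> alcove_k a A0"
    using relative_level_conj by force
qed

end

theorem lemma4p4p3:
  fixes R P L J :: "'v::euclidean_space set"
    and \<sigma> y s w :: "'v \<Rightarrow> 'v"
  assumes "iw_datum R P L \<sigma>"
    and "y \<in> iw_group R L"
    and "s \<in> simple_aff_refls R P"
    and "iw_length P (s \<circ> y \<circ> frob \<sigma> s) = iw_length P y"
    and "J \<subseteq> simple_roots P"
    and "\<sigma> ` J = J"
    and "w \<in> refl_group R"
    and "JWD_alcove R P L \<sigma> J w y"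
  shows "JWD_alcove R P L \<sigma> J (linpart s \<circ> w) (s \<circ> y \<circ> frob \<sigma> s)"
proof -
  obtain t u where y: "y = (\<lambda>v. t + u v)" "t \<in> L" "u \<in> refl_group R"
    using assms(2) unfolding iw_sub_def by blast
  obtain \<beta> m where s: "s = aff_refl \<beta> m" "\<beta> \<in> R" "is_wall R (base_alcove P) \<beta> m"
    using assms(3) unfolding simple_aff_refls_def by blast
  obtain t' u' where w: "inv w \<circ> y \<circ> frob \<sigma> w = (\<lambda>v. t' + u' v)" "t' \<in> L" "u' \<in> refl_group J"
    using assms(8) unfolding JWD_alcove_def iw_sub_def by blast
  interpret iw_conjugation_parabolic R P L \<sigma> y s t u \<beta> m J w u' t'
    using assms(1,5-7) y s w by unfold_locales
  show ?thesis
    using conj_decomposition conj_alcove_levels[OF assms(4)] assms(8)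
    unfolding JWD_alcove_def positive_non_J_def by blast
qed

end
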